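(* Let $\lambda$ be a strongly inaccessible cardinal which is a limit of strongly inaccessible cardinals. Then ${}^\lambda2$ can be partitioned into two sets $A_0,A_1$ such that $A_0\in\mathrm{id}(\mathrm{Cohen}_\lambda)$ and $A_1\in\mathrm{id}(\mathbb{Q}_\lambda)$.
   Context: Cardinals denoted $\partial,\kappa,\lambda$ are strongly inaccessible. For a set $T$ of sequences and an ordinal $\delta$, $\lim_\delta(T)=\{\nu\in{}^\delta 2: \nu\restriction\alpha\in T \text{ for all }\alpha<\delta\}$. The forcing notion $\mathbb{Q}_\kappa$ is defined by induction on strongly inaccessible $\kappa$: $p\in\mathbb{Q}_\kappa$ iff there is a witness $(\varrho,S,\bar\Lambda)$, meaning: (a) $p$ is a nonempty subset of ${}^{\kappa>}2$ closed under initial segments; (b) $S\subseteq\kappa$, every member of $S$ is strongly inaccessible, $S$ is not stationary in $\kappa$, and $S\cap\partial$ is not stationary in $\partial$ for every strongly inaccessible $\partial<\kappa$; (c) $\varrho\in{}^{\kappa>}2$, $p\cap{}^\alpha 2=\{\varrho\restriction\alpha\}$ for all $\alpha\le\ell g(\varrho)$, and $\varrho^\frown\langle 0\rangle,\varrho^\frown\langle1\rangle\in p$; (d) if $\varrho\trianglelefteq\eta\in p$ then $\eta^\frown\langle0\rangle,\eta^\frown\langle1\rangle\in p$; (e) if $\delta\in\kappa\setminus S$ is a limit ordinal with $\delta>\ell g(\varrho)$ and $\eta\in{}^\delta2$, then $\eta\in p$ iff $\eta\restriction\alpha\in p$ for all $\alpha<\delta$; (f) $\bar\Lambda=\langle\Lambda_\partial:\partial\in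 S\rangle$ where each $\Lambda_\partial$ is a set of at most $\partial$ dense open subsets of $\mathbb{Q}_\partial$; (g) if $\partial\in S$ and $\partial>\ell g(\varrho)$ then $p\cap{}^{\partial>}2\in\mathbb{Q}_\partial$, and for $\eta\in{}^\partial2$: $\eta\in p$ iff ($\eta\restriction\alpha\in p$ for all $\alpha<\partial$ and for every $\mathscr I\in\Lambda_\partial$ there is $q\in\mathscr I$ with $\eta\in\lim_\partial(q)$). The order is reverse inclusion. An $\eta\in{}^\lambda2$ fulfils $\mathscr I\subseteq\mathbb{Q}_\lambda$ if $\eta\in\lim_\lambda(q)$ for some $q\in\mathscr I$. $\mathrm{id}(\mathbb{Q}_\lambda)$ is the set of $A\subseteq{}^\lambda2$ for which there are $i( * )\le\lambda$ and dense open subsets $\mathscr I_i$ ($i<i( * )$) of $\mathbb{Q}_\lambda$ such that every $\eta\in A$ fails to fulfil $\mathscr I_i$ for some $i<i( * )$. $\mathrm{id}(\mathrm{Cohen}_\lambda)$ is the set of $A\subseteq{}^\lambda2$ with $A\subseteq\bigcup_{i<i( * )}\lim_\lambda(\mathscr T_i)$ for some $i( * )\le\lambda$ and nowhere dense subtrees $\mathscr T_i$ of $({}^{\lambda>}2,\trianglelefteq)$. *)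

theory Defs
  imports Main "HOL-Library.Equipollence"
begin

text \<open>Ordinals are elements of an arbitrary well-ordered type 'o.
 A sequence of length delta (element of {}^delta 2) is a partial map 'o to bool
 whose domain is the initial segment below delta.\<close>

type_synonym 'o seq = "'o \<Rightarrow> bool option"

definition below :: "'o::wellorder \<Rightarrow> 'o set" where
  "below a = {b. b < a}"

definition sq :: "'o::wellorder \<Rightarrow> 'o seq set" where
  "sq d = {\<nu>. dom \<nu> = below d}"

definition sqlt :: "'o::wellorder \<Rightarrow> 'o seq set" where
  "sqlt k = {\<nu>. \<exists>a<k. \<nu> \<in> sq a}"

definition restr :: "'o::wellorder seq \<Rightarrow> 'o \<Rightarrow> 'o seq" where
  "restr \<nu> a = \<nu> |` below a"

definition limd :: "'o::wellorder \<Rightarrow> 'o seq set \<Rightarrow> 'o seq set" where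
  "limd d T = {\<nu> \<in> sq d. \<forall>a<d. restr \<nu> a \<in> T}"

definition limit_ord :: "'o::wellorder \<Rightarrow> bool" where
  "limit_ord d \<longleftrightarrow> (\<exists>a. a < d) \<and> (\<forall>a<d. \<exists>g. a < g \<and> g < d)"

definition strongly_inaccessible :: "'o::wellorder \<Rightarrow> bool" where
  "strongly_inaccessible k \<longleftrightarrow>
     \<not> countable (below k)
   \<and> (\<forall>X \<subseteq> below k. (\<forall>a<k. \<exists>x\<in>X. a \<le> x) \<longrightarrow> X \<approx> below k)
   \<and> (\<forall>a<k. Pow (below a) \<prec> below k)"

definition club :: "'o::wellorder \<Rightarrow> 'o set \<Rightarrow> bool" where
  "club k C \<longleftrightarrow> C \<subseteq> below k \<and> (\<forall>a<k. \<exists>g\<in>C. a \<le> g)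
     \<and> (\<forall>d<k. limit_ord d \<and> (\<forall>a<d. \<exists>g\<in>C. a \<le> g \<and> g < d) \<longrightarrow> d \<in> C)"

definition stationary :: "'o::wellorder \<Rightarrow> 'o set \<Rightarrow> bool" where
  "stationary k S \<longleftrightarrow> (\<forall>C. club k C \<longrightarrow> S \<inter> C \<noteq> {})"

definition dense_open :: "'a set set \<Rightarrow> 'a set set \<Rightarrow> bool" where
  "dense_open P I \<longleftrightarrow> I \<subseteq> P \<and> (\<forall>p\<in>P. \<exists>q\<in>I. q \<subseteq> p)
     \<and> (\<forall>p\<in>I. \<forall>q\<in>P. q \<subseteq> p \<longrightarrow> q \<in> I)"

text \<open>One step of the inductive definition of Q_kappa, given Q_partial for partial < kappa.\<close>
definition Qstep :: "('o::wellorder \<Rightarrow> 'o seq set set) \<Rightarrow> 'o \<Rightarrow> 'o seq set set" where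
  "Qstep F k = {p. \<exists>\<rho> l S \<Lambda>.
     \<comment> \<open>(a)\<close>
     p \<noteq> {} \<and> p \<subseteq> sqlt k \<and> (\<forall>\<eta>\<in>p. \<forall>a. restr \<eta> a \<in> p)
     \<comment> \<open>(b)\<close>
   \<and> S \<subseteq> below k \<and> (\<forall>d\<in>S. strongly_inaccessible d) \<and> \<not> stationary k S
   \<and> (\<forall>d<k. strongly_inaccessible d \<longrightarrow> \<not> stationary d (S \<inter> below d))
     \<comment> \<open>(c)\<close>
   \<and> l < k \<and> \<rho> \<in> sq l \<and> (\<forall>a\<le>l. p \<inter> sq a = {restr \<rho> a})
   \<and> \<rho>(l \<mapsto> False) \<in> p \<and> \<rho>(l \<mapsto> True) \<in> p
     \<comment> \<open>(d)\<close>
   \<and> (\<forall>\<eta>\<in>p. \<forall>d. \<eta> \<in> sq d \<and> \<rho> \<subseteq>\<^sub>m \<eta> \<longrightarrow> \<eta>(d \<mapsto> False) \<in> p \<and> \<eta>(d \<mapsto> True) \<in> p)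
     \<comment> \<open>(e)\<close>
   \<and> (\<forall>d<k. d \<notin> S \<and> limit_ord d \<and> l < d \<longrightarrow>
        (\<forall>\<eta>\<in>sq d. \<eta> \<in> p \<longleftrightarrow> (\<forall>a<d. restr \<eta> a \<in> p)))
     \<comment> \<open>(f)\<close>
   \<and> (\<forall>d\<in>S. \<Lambda> d \<lesssim> below d \<and> (\<forall>I\<in>\<Lambda> d. dense_open (F d) I))
     \<comment> \<open>(g)\<close>
   \<and> (\<forall>d\<in>S. l < d \<longrightarrow> p \<inter> sqlt d \<in> F d \<and>
        (\<forall>\<eta>\<in>sq d. \<eta> \<in> p \<longleftrightarrow> (\<forall>a<d. restr \<eta> a \<in> p) \<and> (\<forall>I\<in>\<Lambda> d. \<exists>q\<in>I. \<eta> \<in> limd d q)))}"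

definition QQ :: "'o::wellorder \<Rightarrow> 'o seq set set" where
  "QQ = wfrec {(x, y). x < y} Qstep"

definition fulfils :: "'o::wellorder \<Rightarrow> 'o seq \<Rightarrow> 'o seq set set \<Rightarrow> bool" where
  "fulfils lam \<eta> I \<longleftrightarrow> (\<exists>q\<in>I. \<eta> \<in> limd lam q)"

definition id_Q :: "'o::wellorder \<Rightarrow> 'o seq set set" where
  "id_Q lam = {A. A \<subseteq> sq lam \<and> (\<exists>istar \<le> lam. \<exists>I. (\<forall>i<istar. dense_open (QQ lam) (I i))
       \<and> (\<forall>\<eta>\<in>A. \<exists>i<istar. \<not> fulfils lam \<eta> (I i)))}"

definition nowhere_dense_subtree :: "'o::wellorder \<Rightarrow> 'o seq set \<Rightarrow> bool" where
  "nowhere_dense_subtree lam T \<longleftrightarrow> T \<subseteq> sqlt lam \<and> (\<forall>\<eta>\<in>T. \<forall>a. restr \<eta> a \<in> T)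
     \<and> (\<forall>\<eta>\<in>sqlt lam. \<exists>\<nu>\<in>sqlt lam. \<eta> \<subseteq>\<^sub>m \<nu> \<and> \<nu> \<notin> T)"

definition id_Cohen :: "'o::wellorder \<Rightarrow> 'o seq set set" where
  "id_Cohen lam = {A. A \<subseteq> sq lam \<and> (\<exists>istar \<le> lam. \<exists>T. (\<forall>i<istar. nowhere_dense_subtree lam (T i))
       \<and> A \<subseteq> (\<Union>i\<in>below istar. limd lam (T i)))}"

end

theory Submission
  imports Defs
begin

text \<open>Call an inaccessible \<open>\<delta>\<close> a successor inaccessible if the inaccessibles below it are
  bounded by some \<open>\<mu>\<^sub>\<delta> < \<delta>\<close>. The set \<open>D\<close> of successor inaccessibles is nonstationary in
  every inaccessible, but cofinal in \<open>\<lambda>\<close> because \<open>\<lambda>\<close> is a limit of inaccessibles. For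
  \<open>\<delta> \<in> D\<close> the conditions of \<open>Q\<^sub>\<delta>\<close> all of whose branches take the value 1 somewhere in
  \<open>[\<mu>\<^sub>\<delta>, \<delta>)\<close> are dense. Pruning a condition of \<open>Q\<^sub>\<lambda>\<close> at every \<open>\<delta> \<in> D\<close> above its stem,
  i.e. putting \<open>\<delta>\<close> into \<open>S\<close> and this dense set into \<open>\<Lambda>\<^sub>\<delta>\<close>, yields again a condition, so the
  conditions below pruned ones form a dense open set \<open>I\<close>. The branches not fulfilling \<open>I\<close>
  form \<open>A\<^sub>1 \<in> id(Q\<^sub>\<lambda>)\<close>. A branch fulfilling \<open>I\<close> has a 1 in \<open>[\<mu>\<^sub>\<delta>, \<delta>)\<close> for all \<open>\<delta> \<in> D\<close>
  above some \<open>\<beta> < \<lambda>\<close>, and the nodes with this property form a nowhere dense tree: extend a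
  node of length \<open>a\<close> by zeros up to some \<open>\<delta> \<in> D\<close> with \<open>\<mu>\<^sub>\<delta> > a\<close>. So \<open>A\<^sub>0\<close> is covered by
  \<open>\<lambda>\<close> nowhere dense trees.\<close>

section \<open>Sequences\<close>

lemma below_iff [simp]: "b \<in> below a \<longleftrightarrow> b < a"
  by (simp add: below_def)

lemma below_subset_iff: "below a \<subseteq> below b \<longleftrightarrow> a \<le> (b::'o::wellorder)"
  by (auto simp: subset_iff) (meson leI less_irrefl)

lemma below_inject: "below a = below b \<longleftrightarrow> a = (b::'o::wellorder)"
  by (metis below_subset_iff order_antisym order_refl)

lemma sq_level_unique: "\<nu> \<in> sq a \<Longrightarrow> \<nu> \<in> sq b \<Longrightarrow> a = b"
  by (simp add: sq_def below_inject)

lemma dom_restr: "dom (restr \<nu> a) = dom \<nu> \<inter> below a"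
  by (simp add: restr_def)

lemma restr_in_sq_min: "\<nu> \<in> sq d \<Longrightarrow> restr \<nu> a \<in> sq (min a d)"
  by (auto simp: sq_def dom_restr)

lemma restr_in_sq: "\<nu> \<in> sq d \<Longrightarrow> a \<le> d \<Longrightarrow> restr \<nu> a \<in> sq a"
  using restr_in_sq_min by (metis min.absorb1)

lemma restr_apply: "x < a \<Longrightarrow> restr \<nu> a x = \<nu> x"
  by (simp add: restr_def)

lemma restr_eq_self:
  assumes "\<nu> \<in> sq d" "d \<le> a"
  shows "restr \<nu> a = \<nu>"
proof
  fix x
  show "restr \<nu> a x = \<nu> x"
  proof (cases "x < a")
    case False
    then have "x \<notin> dom \<nu>" using assms by (auto simp: sq_def)
    with False show ?thesis by (simp add: restr_def domIff)
  qed (simp add: restr_apply)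
qed

lemma restr_restr: "restr (restr \<nu> a) b = restr \<nu> (min a b)"
  by (auto simp: restr_def restrict_map_def fun_eq_iff)

lemma restr_map_le: "restr \<nu> a \<subseteq>\<^sub>m \<nu>"
  by (simp add: restr_def map_le_def)

lemma map_le_sq_eq_restr:
  assumes "\<eta> \<in> sq a" "\<sigma> \<in> sq m" "\<eta> \<subseteq>\<^sub>m \<sigma>"
  shows "a \<le> m \<and> \<eta> = restr \<sigma> a"
proof
  have "below a \<subseteq> below m" using assms map_le_implies_dom_le by (fastforce simp: sq_def)
  then show "a \<le> m" by (simp add: below_subset_iff)
  show "\<eta> = restr \<sigma> a"
  proof
    fix x show "\<eta> x = restr \<sigma> a x"
      using assms by (cases "x < a") (auto simp: sq_def restr_def map_le_def domIff)
  qed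
qed

lemma map_le_restr_if_le:
  assumes "\<sigma> \<in> sq m" "\<sigma> \<subseteq>\<^sub>m \<eta>"
  shows "m \<le> a \<Longrightarrow> \<sigma> \<subseteq>\<^sub>m restr \<eta> a" and "a \<le> m \<Longrightarrow> restr \<eta> a = restr \<sigma> a"
  using assms by (auto simp: map_le_def sq_def restr_def restrict_map_def fun_eq_iff
      dest: less_le_trans)

lemma dom_upd_sq: "\<eta> \<in> sq d \<Longrightarrow> dom (\<eta>(d \<mapsto> x)) = {b. b \<le> d}"
  by (auto simp: sq_def)

lemma upd_in_sq:
  assumes "\<eta> \<in> sq d" "d < g"
  shows "\<eta>(d \<mapsto> x) \<in> sq (LEAST b. d < b)"
proof -
  have "d < (LEAST b. d < b)" using assms(2) by (rule LeastI)
  then have "below (LEAST b. d < b) = {b. b \<le> d}"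
    using not_less_Least[of _ "\<lambda>b. d < b"] by (fastforce simp: not_less)
  then show ?thesis using dom_upd_sq[OF assms(1)] by (simp add: sq_def)
qed

lemma upd_map_le: "\<eta> \<in> sq d \<Longrightarrow> \<eta> \<subseteq>\<^sub>m \<eta>(d \<mapsto> x)"
  by (auto simp: map_le_def sq_def)

lemma restr_upd: "\<delta> \<le> d \<Longrightarrow> restr (\<eta>(d \<mapsto> x)) \<delta> = restr \<eta> \<delta>"
  by (auto simp: restr_def restrict_map_def fun_eq_iff)

lemma sqlt_iff: "\<nu> \<in> sqlt k \<longleftrightarrow> (\<exists>a<k. \<nu> \<in> sq a)"
  by (simp add: sqlt_def)

lemma sq_in_sqlt: "\<eta> \<in> sq a \<Longrightarrow> a < d \<Longrightarrow> \<eta> \<in> sqlt d"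
  unfolding sqlt_iff by blast

lemma sq_in_sqlt_iff: "\<eta> \<in> sq a \<Longrightarrow> \<eta> \<in> sqlt d \<longleftrightarrow> a < d"
  unfolding sqlt_iff using sq_level_unique by blast

lemma sqlt_mono: "\<eta> \<in> sqlt a \<Longrightarrow> a \<le> d \<Longrightarrow> \<eta> \<in> sqlt d"
  unfolding sqlt_iff by (meson less_le_trans)

lemma restr_in_sqlt: "\<eta> \<in> sqlt d \<Longrightarrow> restr \<eta> a \<in> sqlt d"
  unfolding sqlt_iff by (meson min.strict_coboundedI2 restr_in_sq_min)

lemma upd_in_sqlt:
  assumes "\<eta> \<in> sq d" "limit_ord k" "d < k"
  shows "\<eta>(d \<mapsto> x) \<in> sqlt k"
proof -
  obtain g where "d < g" "g < k" using assms(2,3) by (auto simp: limit_ord_def)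
  then have "(LEAST b. d < b) < k" by (meson Least_le le_less_trans)
  then show ?thesis using upd_in_sq[OF assms(1) \<open>d < g\<close>] sq_in_sqlt by blast
qed

lemma limd_mono: "q \<subseteq> p \<Longrightarrow> limd \<kappa> q \<subseteq> limd \<kappa> p"
  unfolding limd_def by blast

section \<open>Inaccessibles and nonstationary sets\<close>

lemma inacc_infinite: "strongly_inaccessible k \<Longrightarrow> infinite (below k)"
  using countable_finite by (auto simp: strongly_inaccessible_def)

lemma inacc_nonempty: "strongly_inaccessible k \<Longrightarrow> \<exists>a. a < k"
  using inacc_infinite by (metis below_iff equals0I finite.emptyI)

lemma insert_below_lepoll_Pow: "insert a (below a) \<lesssim> Pow (below a)"
proof -
  have "inj_on (\<lambda>x. if x = a then {} else {x}) (insert a (below a))"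
    by (auto simp: inj_on_def)
  then show ?thesis unfolding lepoll_def by (intro exI[of _ "\<lambda>x. if x = a then {} else {x}"]) auto
qed

lemma insert_lepoll_infinite:
  assumes "A \<lesssim> B" "infinite B"
  shows "insert x A \<lesssim> B"
proof (cases "finite A")
  case True
  then show ?thesis by (simp add: finite_lepoll_infinite[OF assms(2)])
next
  case False
  then show ?thesis using lepoll_trans[OF infinite_insert_lepoll assms(1)] by blast
qed

lemma inacc_limit_ord:
  assumes "strongly_inaccessible k"
  shows "limit_ord k"
  unfolding limit_ord_def
proof (intro conjI allI impI)
  show "\<exists>a. a < k" using inacc_nonempty[OF assms] .
next
  fix a assume "a < k"
  show "\<exists>g. a < g \<and> g < k"
  proof (rule ccontr)
    assume "\<nexists>g. a < g \<and> g < k"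
    with \<open>a < k\<close> have "below k = insert a (below a)"
      by (auto simp: below_def) (meson antisym_conv3)
    then have "below k \<lesssim> Pow (below a)" using insert_below_lepoll_Pow by metis
    moreover have "Pow (below a) \<prec> below k"
      using assms \<open>a < k\<close> by (simp add: strongly_inaccessible_def)
    ultimately show False by (meson lepoll_antisym lesspoll_def)
  qed
qed

lemma inacc_countable_bounded:
  assumes "strongly_inaccessible k" "countable X" "X \<subseteq> below k"
  shows "\<exists>b<k. \<forall>x\<in>X. x < b"
proof (rule ccontr)
  assume "\<not> ?thesis"
  then have "\<forall>a<k. \<exists>x\<in>X. a \<le> x" by (meson not_less)
  then have "X \<approx> below k" using assms unfolding strongly_inaccessible_def by blast
  then have "countable (below k)" using assms(2) countable_eqpoll eqpoll_sym by blast
  then show False using assms(1) unfolding strongly_inaccessible_def by blast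
qed

lemma omega_limit_below_inacc:
  fixes f :: "'o::wellorder \<Rightarrow> 'o"
  assumes "strongly_inaccessible k" and f: "\<And>x. x < k \<Longrightarrow> x < f x \<and> f x < k" and "a < k"
  shows "\<exists>g<k. limit_ord g \<and> (\<forall>n. (f^^n) a < g) \<and> (\<forall>c<g. \<exists>n. c < (f^^n) a)"
proof -
  define s where "s n = (f^^n) a" for n
  have s_lt: "s n < k" for n
    by (induction n) (use assms f in \<open>auto simp: s_def\<close>)
  have s_inc: "s n < s (Suc n)" for n
    using f[OF s_lt] by (simp add: s_def)
  obtain b where "b < k" and s_b: "\<And>n. s n < b"
    using inacc_countable_bounded[OF assms(1), of "range s"] s_lt by fastforce
  define g where "g = (LEAST g. \<forall>n. s n < g)"
  have s_g: "s n < g" for n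
    unfolding g_def by (rule LeastI2[of _ b]) (use s_b in auto)
  have "g \<le> b"
    unfolding g_def by (rule Least_le) (use s_b in blast)
  have cofinal: "\<exists>n. c < s n" if c: "c < g" for c
  proof -
    obtain n where "c \<le> s n" using not_less_Least[OF c[unfolded g_def]] by (auto simp: not_less)
    then show ?thesis using s_inc le_less_trans by blast
  qed
  have "limit_ord g"
    unfolding limit_ord_def using s_g cofinal by blast
  with s_g cofinal \<open>g \<le> b\<close> \<open>b < k\<close> show ?thesis
    unfolding s_def by (meson le_less_trans)
qed

lemma club_unbounded:
  assumes "club k C" "limit_ord k" "x < k"
  shows "\<exists>g\<in>C. x < g"
proof -
  obtain y where "x < y" "y < k" using assms(2,3) by (auto simp: limit_ord_def)
  then show ?thesis using assms(1) unfolding club_def by (meson less_le_trans)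
qed

lemma club_closed:
  assumes "club k C" "g < k" "limit_ord g" "\<And>c. c < g \<Longrightarrow> \<exists>h\<in>C. c < h \<and> h < g"
  shows "g \<in> C"
  using assms unfolding club_def by (meson less_imp_le)

lemma club_Int:
  assumes "strongly_inaccessible k" "club k C1" "club k C2"
  shows "club k (C1 \<inter> C2)"
proof -
  have lim: "limit_ord k" by (rule inacc_limit_ord[OF assms(1)])
  obtain f1 where f1: "\<And>x. x < k \<Longrightarrow> f1 x \<in> C1 \<and> x < f1 x"
    using club_unbounded[OF assms(2) lim] by metis
  obtain f2 where f2: "\<And>x. x < k \<Longrightarrow> f2 x \<in> C2 \<and> x < f2 x"
    using club_unbounded[OF assms(3) lim] by metis
  have C_below: "C1 \<subseteq> below k" "C2 \<subseteq> below k" using assms(2,3) by (auto simp: club_def)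
  define f where "f = f2 \<circ> f1"
  have f: "x < f1 x \<and> f1 x < f x \<and> f1 x \<in> C1 \<and> f x \<in> C2 \<and> f x < k" if "x < k" for x
  proof -
    have "f1 x < k" using f1[OF that] C_below by auto
    then show ?thesis using f1[OF that] f2[of "f1 x"] C_below by (auto simp: f_def)
  qed
  have "\<exists>g\<in>C1 \<inter> C2. a \<le> g" if a: "a < k" for a
  proof -
    obtain g where g: "g < k" "limit_ord g" "\<forall>n. (f^^n) a < g" "\<forall>c<g. \<exists>n. c < (f^^n) a"
      using omega_limit_below_inacc[OF assms(1) _ a, of f] f by (meson less_trans)
    have iter_lt: "(f^^n) a < k" for n using g(1,3) less_trans by blast
    have "(\<exists>h\<in>C1. c < h \<and> h < g) \<and> (\<exists>h\<in>C2. c < h \<and> h < g)" if c: "c < g" for c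
    proof -
      obtain n where "c < (f^^n) a" using g(4) c by blast
      moreover have "f ((f^^n) a) < g" using g(3)[rule_format, of "Suc n"] by simp
      ultimately show ?thesis using f[OF iter_lt[of n]] by (meson less_trans)
    qed
    then have "g \<in> C1" "g \<in> C2"
      using club_closed[OF assms(2) g(1,2)] club_closed[OF assms(3) g(1,2)] by blast+
    moreover have "a \<le> g" using g(3)[rule_format, of 0] by simp
    ultimately show ?thesis by blast
  qed
  with assms(2,3) show ?thesis unfolding club_def by blast
qed

lemma nonstationary_Un:
  assumes "strongly_inaccessible k" "\<not> stationary k S" "\<not> stationary k T"
  shows "\<not> stationary k (S \<union> T)"
  using assms club_Int unfolding stationary_def by blast

lemma nonstationary_subset: "\<not> stationary k S \<Longrightarrow> T \<subseteq> S \<Longrightarrow> \<not> stationary k T"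
  by (auto simp: stationary_def)

lemma club_tail:
  assumes "limit_ord k" "a < k"
  shows "club k {g. a < g \<and> g < k}"
  unfolding club_def
proof (intro conjI allI impI)
  show "\<exists>g\<in>{g. a < g \<and> g < k}. x \<le> g" if "x < k" for x
  proof (cases "a < x")
    case False
    obtain y where "a < y" "y < k" using assms by (auto simp: limit_ord_def)
    with False show ?thesis by (auto intro!: bexI[of _ y])
  qed (use that in auto)
  show "d \<in> {g. a < g \<and> g < k}"
    if d: "d < k" "limit_ord d \<and> (\<forall>b<d. \<exists>g\<in>{g. a < g \<and> g < k}. b \<le> g \<and> g < d)" for d
  proof -
    obtain b where "b < d" using d(2) by (auto simp: limit_ord_def)
    then obtain g where "a < g" "g < d" using d(2) by blast
    with d(1) show ?thesis by auto
  qed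
qed auto

lemma club_limits_of_inacc:
  assumes "strongly_inaccessible k"
    and unbounded: "\<forall>a<k. \<exists>i. strongly_inaccessible i \<and> a < i \<and> i < k"
  shows "club k {g. g < k \<and> limit_ord g \<and> (\<forall>a<g. \<exists>i. strongly_inaccessible i \<and> a < i \<and> i < g)}"
    (is "club k ?C")
  unfolding club_def
proof (intro conjI allI impI)
  obtain f where f: "\<And>x. x < k \<Longrightarrow> strongly_inaccessible (f x) \<and> x < f x \<and> f x < k"
    using unbounded by metis
  show "\<exists>g\<in>?C. a \<le> g" if a: "a < k" for a
  proof -
    obtain g where g: "g < k" "limit_ord g" "\<forall>n. (f^^n) a < g" "\<forall>c<g. \<exists>n. c < (f^^n) a"
      using omega_limit_below_inacc[OF assms(1) _ a, of f] f by blast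
    have "\<exists>i. strongly_inaccessible i \<and> c < i \<and> i < g" if c: "c < g" for c
    proof -
      obtain n where "c < (f^^n) a" using g(4) c by blast
      moreover have "(f^^Suc n) a < g" using g(3) by blast
      moreover have "(f^^n) a < k" using g(1,3) less_trans by blast
      ultimately show ?thesis using f[of "(f^^n) a"] by (metis comp_apply funpow.simps(2) less_trans)
    qed
    with g(1,2) have "g \<in> ?C" by simp
    moreover have "a \<le> g" using g(3)[rule_format, of 0] by simp
    ultimately show ?thesis by blast
  qed
  show "d \<in> ?C" if d: "d < k" "limit_ord d \<and> (\<forall>a<d. \<exists>g\<in>?C. a \<le> g \<and> g < d)" for d
  proof -
    have "\<exists>i. strongly_inaccessible i \<and> a < i \<and> i < d" if "a < d" for a
    proof -
      obtain a' where "a < a'" "a' < d" using \<open>a < d\<close> d(2) by (auto simp: limit_ord_def)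
      then obtain g where "g \<in> ?C" "a' \<le> g" "g < d" using d(2) by blast
      then obtain i where "strongly_inaccessible i" "a < i" "i < g"
        using \<open>a < a'\<close> less_le_trans by blast
      with \<open>g < d\<close> show ?thesis using less_trans by blast
    qed
    with d show ?thesis by simp
  qed
qed auto

section \<open>Conditions of \<open>Q\<^sub>\<kappa>\<close>\<close>

text \<open>\<open>Q_cond F k p \<rho> l S \<Lambda>\<close> says that \<open>(\<rho>, S, \<Lambda>)\<close> is a witness for \<open>p \<in> Q\<^sub>k\<close>, clauses
  (a)--(g), with \<open>l\<close> the length of \<open>\<rho>\<close> and \<open>F \<partial>\<close> playing the role of \<open>Q\<^sub>\<partial>\<close> for \<open>\<partial> < k\<close>.\<close>

locale Q_cond =
  fixes F :: "'o::wellorder \<Rightarrow> 'o seq set set" and k :: 'o and p :: "'o seq set"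
    and \<rho> :: "'o seq" and l :: 'o and S :: "'o set" and \<Lambda> :: "'o \<Rightarrow> 'o seq set set set"
  assumes nonempty: "p \<noteq> {}"
    and sub_sqlt: "p \<subseteq> sqlt k"
    and restr_closed: "\<And>\<eta> a. \<eta> \<in> p \<Longrightarrow> restr \<eta> a \<in> p"
    and S_below: "S \<subseteq> below k"
    and S_inacc: "\<And>d. d \<in> S \<Longrightarrow> strongly_inaccessible d"
    and S_nonstationary: "\<not> stationary k S"
    and S_nonstationary_below:
      "\<And>d. d < k \<Longrightarrow> strongly_inaccessible d \<Longrightarrow> \<not> stationary d (S \<inter> below d)"
    and stem_lt: "l < k"
    and stem_sq: "\<rho> \<in> sq l"
    and levels_upto_stem: "\<And>a. a \<le> l \<Longrightarrow> p \<inter> sq a = {restr \<rho> a}"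
    and stem_False: "\<rho>(l \<mapsto> False) \<in> p"
    and stem_True: "\<rho>(l \<mapsto> True) \<in> p"
    and splitting:
      "\<And>\<eta> d. \<eta> \<in> p \<Longrightarrow> \<eta> \<in> sq d \<Longrightarrow> \<rho> \<subseteq>\<^sub>m \<eta> \<Longrightarrow> \<eta>(d \<mapsto> False) \<in> p \<and> \<eta>(d \<mapsto> True) \<in> p"
    and continuous:
      "\<And>d \<eta>. d < k \<Longrightarrow> d \<notin> S \<Longrightarrow> limit_ord d \<Longrightarrow> l < d \<Longrightarrow> \<eta> \<in> sq d \<Longrightarrow>
        \<eta> \<in> p \<longleftrightarrow> (\<forall>a<d. restr \<eta> a \<in> p)"
    and Lambda_small: "\<And>d. d \<in> S \<Longrightarrow> \<Lambda> d \<lesssim> below d"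
    and Lambda_dense: "\<And>d I. d \<in> S \<Longrightarrow> I \<in> \<Lambda> d \<Longrightarrow> dense_open (F d) I"
    and restr_in_F: "\<And>d. d \<in> S \<Longrightarrow> l < d \<Longrightarrow> p \<inter> sqlt d \<in> F d"
    and at_S:
      "\<And>d \<eta>. d \<in> S \<Longrightarrow> l < d \<Longrightarrow> \<eta> \<in> sq d \<Longrightarrow>
        \<eta> \<in> p \<longleftrightarrow> (\<forall>a<d. restr \<eta> a \<in> p) \<and> (\<forall>I\<in>\<Lambda> d. \<exists>q\<in>I. \<eta> \<in> limd d q)"

lemma Qstep_eq_Q_cond: "Qstep F k = {p. \<exists>\<rho> l S \<Lambda>. Q_cond F k p \<rho> l S \<Lambda>}"
  unfolding Qstep_def Q_cond_def
  by (intro Collect_cong ex_cong1) (simp add: Ball_def Bex_def imp_conjL imp_conjR all_conj_distrib)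

lemma Q_cond_cong:
  assumes "\<And>d. d < k \<Longrightarrow> F d = G d"
  shows "Q_cond F k p \<rho> l S \<Lambda> \<longleftrightarrow> Q_cond G k p \<rho> l S \<Lambda>"
proof (cases "S \<subseteq> below k")
  case True
  with assms have "\<And>d. d \<in> S \<Longrightarrow> F d = G d" by (auto simp: below_def)
  then show ?thesis unfolding Q_cond_def by simp
next
  case False
  then show ?thesis unfolding Q_cond_def by simp
qed

lemma QQ_fixpoint: "QQ = Qstep QQ"
proof -
  have "adm_wf {(x, y). x < y} (Qstep :: ('o::wellorder \<Rightarrow> 'o seq set set) \<Rightarrow> 'o \<Rightarrow> _)"
    unfolding adm_wf_def
  proof (intro allI impI)
    fix f g :: "'o \<Rightarrow> 'o seq set set" and x :: 'o
    assume "\<forall>z. (z, x) \<in> {(x, y). x < y} \<longrightarrow> f z = g z"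
    then have "Q_cond f x = Q_cond g x" using Q_cond_cong[of x f g] by (auto simp: fun_eq_iff)
    then show "Qstep f x = Qstep g x" by (simp add: Qstep_eq_Q_cond)
  qed
  then show ?thesis unfolding QQ_def using wfrec_fixpoint[OF wf] by (simp add: fun_eq_iff)
qed

lemma QQ_iff: "p \<in> QQ k \<longleftrightarrow> (\<exists>\<rho> l S \<Lambda>. Q_cond QQ k p \<rho> l S \<Lambda>)"
  by (subst QQ_fixpoint) (simp add: Qstep_eq_Q_cond)

lemma Q_cond_in_QQ: "Q_cond QQ k p \<rho> l S \<Lambda> \<Longrightarrow> p \<in> QQ k"
  using QQ_iff by blast

context Q_cond
begin

lemma stem_in: "\<rho> \<in> p"
  using levels_upto_stem[of l] restr_eq_self[OF stem_sq order_refl] by auto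

lemma limd_extends_stem:
  assumes "\<eta> \<in> limd k p"
  shows "\<rho> \<subseteq>\<^sub>m \<eta>"
proof -
  have "\<eta> \<in> sq k" "restr \<eta> l \<in> p" using assms stem_lt by (auto simp: limd_def)
  then have "restr \<eta> l \<in> p \<inter> sq l" using restr_in_sq stem_lt less_imp_le by blast
  then have "restr \<eta> l = \<rho>"
    using levels_upto_stem[of l] restr_eq_self[OF stem_sq order_refl] by auto
  then show ?thesis using restr_map_le by metis
qed

lemma node_above_if_branch:
  assumes "\<eta> \<in> limd k p" "\<mu> < k"
  shows "\<exists>\<tau> m. \<tau> \<in> p \<and> \<mu> \<le> m \<and> \<tau> \<in> sq m \<and> \<rho> \<subseteq>\<^sub>m \<tau>"
proof -
  let ?m = "max \<mu> l"
  have "?m < k" using assms(2) stem_lt by simp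
  moreover have "\<eta> \<in> sq k" using assms(1) by (simp add: limd_def)
  ultimately have "restr \<eta> ?m \<in> p" "restr \<eta> ?m \<in> sq ?m"
    using assms(1) restr_in_sq less_imp_le unfolding limd_def by blast+
  moreover have "\<rho> \<subseteq>\<^sub>m restr \<eta> ?m"
    using map_le_restr_if_le(1)[OF stem_sq limd_extends_stem[OF assms(1)]] by simp
  ultimately show ?thesis by (meson max.cobounded1)
qed

lemma restrict_to_inacc:
  assumes d: "strongly_inaccessible d" "l < d" "d < k"
  shows "Q_cond F d (p \<inter> sqlt d) \<rho> l (S \<inter> below d) \<Lambda>"
proof (rule Q_cond.intro)
  have lim: "limit_ord d" using inacc_limit_ord[OF d(1)] .
  show "p \<inter> sqlt d \<noteq> {}" using stem_in sq_in_sqlt[OF stem_sq d(2)] by blast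
  show "p \<inter> sqlt d \<subseteq> sqlt d" by blast
  show "restr \<eta> a \<in> p \<inter> sqlt d" if "\<eta> \<in> p \<inter> sqlt d" for \<eta> a
    using that restr_closed restr_in_sqlt by blast
  show "S \<inter> below d \<subseteq> below d" by blast
  show "strongly_inaccessible d'" if "d' \<in> S \<inter> below d" for d' using that S_inacc by blast
  show "\<not> stationary d (S \<inter> below d)" using S_nonstationary_below d by blast
  show "\<not> stationary d' (S \<inter> below d \<inter> below d')" if "d' < d" "strongly_inaccessible d'" for d'
  proof -
    have "S \<inter> below d \<inter> below d' = S \<inter> below d'" using that(1) by auto
    then show ?thesis using S_nonstationary_below[of d'] that d(3) by (metis less_trans)
  qed
  show "l < d" by (fact d(2))
  show "\<rho> \<in> sq l" by (fact stem_sq)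
  show "p \<inter> sqlt d \<inter> sq a = {restr \<rho> a}" if "a \<le> l" for a
  proof -
    have "sq a \<subseteq> sqlt d" using that d(2) sq_in_sqlt le_less_trans by blast
    then show ?thesis using levels_upto_stem[OF that] by blast
  qed
  show "\<rho>(l \<mapsto> False) \<in> p \<inter> sqlt d" "\<rho>(l \<mapsto> True) \<in> p \<inter> sqlt d"
    using stem_False stem_True upd_in_sqlt[OF stem_sq lim d(2)] by blast+
  show "\<eta>(d' \<mapsto> False) \<in> p \<inter> sqlt d \<and> \<eta>(d' \<mapsto> True) \<in> p \<inter> sqlt d"
    if "\<eta> \<in> p \<inter> sqlt d" "\<eta> \<in> sq d'" "\<rho> \<subseteq>\<^sub>m \<eta>" for \<eta> d'
  proof -
    have "d' < d" using that(1,2) sq_in_sqlt_iff by blast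
    then show ?thesis using splitting[of \<eta> d'] that upd_in_sqlt[OF that(2) lim] by blast
  qed
  show "\<eta> \<in> p \<inter> sqlt d \<longleftrightarrow> (\<forall>a<d'. restr \<eta> a \<in> p \<inter> sqlt d)"
    if "d' < d" "d' \<notin> S \<inter> below d" "limit_ord d'" "l < d'" "\<eta> \<in> sq d'" for d' \<eta>
  proof -
    have "\<eta> \<in> sqlt d" using that(1,5) sq_in_sqlt by blast
    then show ?thesis using continuous[of d' \<eta>] that d(3) restr_in_sqlt by auto
  qed
  show "\<Lambda> d' \<lesssim> below d'" if "d' \<in> S \<inter> below d" for d' using that Lambda_small by blast
  show "dense_open (F d') I" if "d' \<in> S \<inter> below d" "I \<in> \<Lambda> d'" for d' I
    using that Lambda_dense by blast
  show "p \<inter> sqlt d \<inter> sqlt d' \<in> F d'" if "d' \<in> S \<inter> below d" "l < d'" for d'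
  proof -
    have "p \<inter> sqlt d \<inter> sqlt d' = p \<inter> sqlt d'" using that(1) sqlt_mono[of _ d' d] by auto
    then show ?thesis using restr_in_F that by auto
  qed
  show "\<eta> \<in> p \<inter> sqlt d \<longleftrightarrow>
      (\<forall>a<d'. restr \<eta> a \<in> p \<inter> sqlt d) \<and> (\<forall>I\<in>\<Lambda> d'. \<exists>q\<in>I. \<eta> \<in> limd d' q)"
    if "d' \<in> S \<inter> below d" "l < d'" "\<eta> \<in> sq d'" for d' \<eta>
  proof -
    have "\<eta> \<in> sqlt d" using that(1,3) sq_in_sqlt by auto
    then show ?thesis using at_S[of d' \<eta>] that restr_in_sqlt by auto
  qed
qed

end

section \<open>Cones\<close>

definition cone :: "'o::wellorder seq set \<Rightarrow> 'o seq \<Rightarrow> 'o seq set" where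
  "cone p \<sigma> = {\<eta>\<in>p. \<eta> \<subseteq>\<^sub>m \<sigma> \<or> \<sigma> \<subseteq>\<^sub>m \<eta>}"

lemma cone_subset: "cone p \<sigma> \<subseteq> p"
  by (auto simp: cone_def)

lemma cone_Int: "cone (p \<inter> X) \<sigma> = cone p \<sigma> \<inter> X"
  by (auto simp: cone_def)

lemma restr_in_cone:
  assumes "\<And>\<eta> a. \<eta> \<in> p \<Longrightarrow> restr \<eta> a \<in> p" "\<sigma> \<in> sq m" "\<eta> \<in> cone p \<sigma>"
  shows "restr \<eta> a \<in> cone p \<sigma>"
proof -
  have "restr \<eta> a \<subseteq>\<^sub>m \<sigma> \<or> \<sigma> \<subseteq>\<^sub>m restr \<eta> a"
  proof (cases "\<sigma> \<subseteq>\<^sub>m \<eta>")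
    case True
    then show ?thesis
      using map_le_restr_if_le[OF assms(2) True] restr_map_le[of \<sigma> a] by (cases "m \<le> a") auto
  next
    case False
    then show ?thesis using assms(3) map_le_trans[OF restr_map_le] by (auto simp: cone_def)
  qed
  then show ?thesis using assms(1,3) by (auto simp: cone_def)
qed

lemma map_le_if_restr_in_cone:
  assumes "\<eta> \<in> sq d" "m \<le> d" "\<sigma> \<in> sq m" "restr \<eta> m \<in> cone p \<sigma>"
  shows "\<sigma> \<subseteq>\<^sub>m \<eta>"
proof -
  have "restr \<eta> m \<in> sq m" using restr_in_sq[OF assms(1,2)] .
  then have "restr \<eta> m \<subseteq>\<^sub>m \<sigma> \<Longrightarrow> restr \<eta> m = \<sigma>"
    using map_le_sq_eq_restr[OF _ assms(3)] restr_eq_self[OF assms(3) order_refl] by metis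
  then show ?thesis
    using assms(4) restr_map_le[of \<eta> m] map_le_trans by (auto simp: cone_def)
qed

lemma cone_level:
  assumes "\<And>\<eta> a. \<eta> \<in> p \<Longrightarrow> restr \<eta> a \<in> p" "\<sigma> \<in> p" "\<sigma> \<in> sq m" "a \<le> m"
  shows "cone p \<sigma> \<inter> sq a = {restr \<sigma> a}"
proof
  show "{restr \<sigma> a} \<subseteq> cone p \<sigma> \<inter> sq a"
    using assms restr_in_sq restr_map_le by (auto simp: cone_def)
  show "cone p \<sigma> \<inter> sq a \<subseteq> {restr \<sigma> a}"
  proof
    fix \<eta> assume \<eta>: "\<eta> \<in> cone p \<sigma> \<inter> sq a"
    have "\<eta> = restr \<sigma> a" if "\<sigma> \<subseteq>\<^sub>m \<eta>"
    proof -
      have "m \<le> a" "\<sigma> = restr \<eta> m"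
        using map_le_sq_eq_restr[OF assms(3) _ that] \<eta> by auto
      with assms(4) have "\<sigma> = \<eta>" "m = a" using restr_eq_self \<eta> by auto
      then show ?thesis using restr_eq_self[OF assms(3) order_refl] by simp
    qed
    then show "\<eta> \<in> {restr \<sigma> a}" using \<eta> map_le_sq_eq_restr[OF _ assms(3)] by (auto simp: cone_def)
  qed
qed

lemma limd_cone_extends:
  assumes "\<And>\<eta> a. \<eta> \<in> p \<Longrightarrow> restr \<eta> a \<in> p" "\<sigma> \<in> p" "\<sigma> \<in> sq m" "m < \<kappa>"
    and "\<eta> \<in> limd \<kappa> (cone p \<sigma>)"
  shows "\<sigma> \<subseteq>\<^sub>m \<eta>"
proof -
  have "\<eta> \<in> sq \<kappa>" "restr \<eta> m \<in> cone p \<sigma>" using assms(4,5) by (auto simp: limd_def)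
  moreover have "restr \<eta> m \<in> sq m" using restr_in_sq \<open>\<eta> \<in> sq \<kappa>\<close> assms(4) less_imp_le by blast
  ultimately have "restr \<eta> m = \<sigma>"
    using cone_level[OF assms(1-3) order_refl] restr_eq_self[OF assms(3) order_refl] by auto
  then show ?thesis using restr_map_le by metis
qed

context Q_cond
begin

lemma cone_splitting:
  assumes "\<rho> \<subseteq>\<^sub>m \<sigma>" "\<eta> \<in> cone p \<sigma>" "\<eta> \<in> sq d" "\<sigma> \<subseteq>\<^sub>m \<eta>"
  shows "\<eta>(d \<mapsto> False) \<in> cone p \<sigma> \<and> \<eta>(d \<mapsto> True) \<in> cone p \<sigma>"
proof -
  have "\<eta>(d \<mapsto> False) \<in> p \<and> \<eta>(d \<mapsto> True) \<in> p"
    using splitting[of \<eta> d] assms map_le_trans cone_subset by blast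
  moreover have "\<sigma> \<subseteq>\<^sub>m \<eta>(d \<mapsto> x)" for x using map_le_trans[OF assms(4) upd_map_le[OF assms(3)]] .
  ultimately show ?thesis by (simp add: cone_def)
qed

lemma cone_at_S:
  assumes \<sigma>: "\<sigma> \<in> sq m" "\<rho> \<subseteq>\<^sub>m \<sigma>" and d: "d \<in> S" "m < d" "\<eta> \<in> sq d"
  shows "\<eta> \<in> cone p \<sigma> \<longleftrightarrow> (\<forall>a<d. restr \<eta> a \<in> cone p \<sigma>) \<and> (\<forall>I\<in>\<Lambda> d. \<exists>q\<in>I. \<eta> \<in> limd d q)"
    (is "_ \<longleftrightarrow> ?restrs \<and> ?fulfils")
proof -
  have "l < d" using map_le_sq_eq_restr[OF stem_sq \<sigma>] d(2) le_less_trans by blast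
  then have in_p: "\<eta> \<in> p \<longleftrightarrow> (\<forall>a<d. restr \<eta> a \<in> p) \<and> ?fulfils" using at_S d by blast
  show ?thesis
  proof
    assume "\<eta> \<in> cone p \<sigma>"
    then show "?restrs \<and> ?fulfils" using restr_in_cone[OF restr_closed \<sigma>(1)] in_p cone_subset by blast
  next
    assume restrs: "?restrs \<and> ?fulfils"
    then have "\<eta> \<in> p" using in_p cone_subset by blast
    moreover have "\<sigma> \<subseteq>\<^sub>m \<eta>"
      using map_le_if_restr_in_cone[OF d(3) _ \<sigma>(1)] restrs d(2) less_imp_le by blast
    ultimately show "\<eta> \<in> cone p \<sigma>" by (simp add: cone_def)
  qed
qed

lemma cone_Q_cond:
  assumes \<sigma>: "\<sigma> \<in> p" "\<sigma> \<in> sq m" "\<rho> \<subseteq>\<^sub>m \<sigma>"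
    and cone_in_F: "\<And>d. d \<in> S \<Longrightarrow> m < d \<Longrightarrow> cone p \<sigma> \<inter> sqlt d \<in> F d"
  shows "Q_cond F k (cone p \<sigma>) \<sigma> m S \<Lambda>"
proof (rule Q_cond.intro)
  have "l \<le> m" using map_le_sq_eq_restr[OF stem_sq \<sigma>(2,3)] by blast
  have cone_restr: "restr \<eta> a \<in> cone p \<sigma>" if "\<eta> \<in> cone p \<sigma>" for \<eta> a
    using restr_in_cone[OF restr_closed \<sigma>(2) that] .
  have \<sigma>_cone: "\<sigma> \<in> cone p \<sigma>" using \<sigma>(1) by (simp add: cone_def)
  show "cone p \<sigma> \<noteq> {}" using \<sigma>_cone by blast
  show "cone p \<sigma> \<subseteq> sqlt k" using cone_subset sub_sqlt by blast
  show "restr \<eta> a \<in> cone p \<sigma>" if "\<eta> \<in> cone p \<sigma>" for \<eta> a using cone_restr that .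
  show "S \<subseteq> below k" "\<not> stationary k S" by (fact S_below S_nonstationary)+
  show "strongly_inaccessible d" if "d \<in> S" for d using S_inacc that .
  show "\<not> stationary d (S \<inter> below d)" if "d < k" "strongly_inaccessible d" for d
    using S_nonstationary_below that .
  show "m < k" using \<sigma>(1,2) sub_sqlt sq_in_sqlt_iff by blast
  show "\<sigma> \<in> sq m" by (fact \<sigma>(2))
  show "cone p \<sigma> \<inter> sq a = {restr \<sigma> a}" if "a \<le> m" for a
    using cone_level[OF restr_closed \<sigma>(1,2) that] .
  show "\<sigma>(m \<mapsto> False) \<in> cone p \<sigma>" "\<sigma>(m \<mapsto> True) \<in> cone p \<sigma>"
    using cone_splitting[OF \<sigma>(3) \<sigma>_cone \<sigma>(2) map_le_refl] by blast+
  show "\<eta>(d \<mapsto> False) \<in> cone p \<sigma> \<and> \<eta>(d \<mapsto> True) \<in> cone p \<sigma>"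
    if "\<eta> \<in> cone p \<sigma>" "\<eta> \<in> sq d" "\<sigma> \<subseteq>\<^sub>m \<eta>" for \<eta> d
    using cone_splitting[OF \<sigma>(3) that] .
  show "\<eta> \<in> cone p \<sigma> \<longleftrightarrow> (\<forall>a<d. restr \<eta> a \<in> cone p \<sigma>)"
    if "d < k" "d \<notin> S" "limit_ord d" "m < d" "\<eta> \<in> sq d" for d \<eta>
  proof
    assume restrs: "\<forall>a<d. restr \<eta> a \<in> cone p \<sigma>"
    then have "\<eta> \<in> p"
      using continuous[of d \<eta>] that \<open>l \<le> m\<close> cone_subset by (meson le_less_trans subsetD)
    moreover have "\<sigma> \<subseteq>\<^sub>m \<eta>"
      using map_le_if_restr_in_cone[OF that(5) _ \<sigma>(2)] restrs that(4) less_imp_le by blast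
    ultimately show "\<eta> \<in> cone p \<sigma>" by (simp add: cone_def)
  qed (use cone_restr in blast)
  show "\<Lambda> d \<lesssim> below d" if "d \<in> S" for d using Lambda_small that .
  show "dense_open (F d) I" if "d \<in> S" "I \<in> \<Lambda> d" for d I using Lambda_dense that .
  show "cone p \<sigma> \<inter> sqlt d \<in> F d" if "d \<in> S" "m < d" for d using cone_in_F that .
  show "\<eta> \<in> cone p \<sigma> \<longleftrightarrow> (\<forall>a<d. restr \<eta> a \<in> cone p \<sigma>) \<and> (\<forall>I\<in>\<Lambda> d. \<exists>q\<in>I. \<eta> \<in> limd d q)"
    if "d \<in> S" "m < d" "\<eta> \<in> sq d" for d \<eta>
    using cone_at_S[OF \<sigma>(2,3) that] .
qed

end

lemma Q_cond_cone:
  "Q_cond QQ \<kappa> p \<rho> l S \<Lambda> \<Longrightarrow> \<sigma> \<in> p \<Longrightarrow> \<sigma> \<in> sq m \<Longrightarrow> \<rho> \<subseteq>\<^sub>m \<sigma> \<Longrightarrow>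
    Q_cond QQ \<kappa> (cone p \<sigma>) \<sigma> m S \<Lambda>"
proof (induction \<kappa> arbitrary: p \<rho> l S rule: less_induct)
  case (less \<kappa>)
  interpret Q_cond QQ \<kappa> p \<rho> l S \<Lambda> by (fact less.prems(1))
  show ?case
  proof (rule cone_Q_cond[OF less.prems(2-4)])
    fix d assume "d \<in> S" "m < d"
    then have "l < d" "d < \<kappa>"
      using map_le_sq_eq_restr[OF stem_sq less.prems(3,4)] S_below le_less_trans by auto
    then have "Q_cond QQ d (p \<inter> sqlt d) \<rho> l (S \<inter> below d) \<Lambda>"
      using restrict_to_inacc S_inacc \<open>d \<in> S\<close> by blast
    moreover have "\<sigma> \<in> p \<inter> sqlt d" using less.prems(2) sq_in_sqlt[OF less.prems(3) \<open>m < d\<close>] by blast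
    ultimately have "Q_cond QQ d (cone (p \<inter> sqlt d) \<sigma>) \<sigma> m (S \<inter> below d) \<Lambda>"
      using less.IH[OF \<open>d < \<kappa>\<close>] less.prems(3,4) by blast
    then show "cone p \<sigma> \<inter> sqlt d \<in> QQ d" using Q_cond_in_QQ cone_Int by metis
  qed
qed

section \<open>Forcing a 1 below an inaccessible\<close>

definition true_between :: "'o::wellorder \<Rightarrow> 'o \<Rightarrow> 'o seq set" where
  "true_between \<mu> \<kappa> = {\<nu>. \<exists>\<alpha>. \<mu> \<le> \<alpha> \<and> \<alpha> < \<kappa> \<and> \<nu> \<alpha> = Some True}"

definition hitting :: "'o::wellorder \<Rightarrow> 'o \<Rightarrow> 'o seq set set" where
  "hitting \<kappa> \<mu> = {q \<in> QQ \<kappa>. limd \<kappa> q \<subseteq> true_between \<mu> \<kappa>}"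

lemma dense_open_hitting:
  assumes "\<mu> < \<kappa>"
  shows "dense_open (QQ \<kappa>) (hitting \<kappa> \<mu>)"
  unfolding dense_open_def
proof (intro conjI ballI impI)
  show "hitting \<kappa> \<mu> \<subseteq> QQ \<kappa>" by (auto simp: hitting_def)
next
  fix p q assume "p \<in> hitting \<kappa> \<mu>" "q \<in> QQ \<kappa>" "q \<subseteq> p"
  then show "q \<in> hitting \<kappa> \<mu>" using limd_mono[of q p \<kappa>] by (auto simp: hitting_def)
next
  fix p assume "p \<in> QQ \<kappa>"
  then obtain \<rho> l S \<Lambda> where cond: "Q_cond QQ \<kappa> p \<rho> l S \<Lambda>" using QQ_iff by blast
  then interpret Q_cond QQ \<kappa> p \<rho> l S \<Lambda> .
  show "\<exists>q\<in>hitting \<kappa> \<mu>. q \<subseteq> p"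
  proof (cases "limd \<kappa> p = {}")
    case True
    with \<open>p \<in> QQ \<kappa>\<close> show ?thesis by (auto simp: hitting_def)
  next
    case False
    then obtain \<tau> m where \<tau>: "\<tau> \<in> p" "\<mu> \<le> m" "\<tau> \<in> sq m" "\<rho> \<subseteq>\<^sub>m \<tau>"
      using node_above_if_branch assms by blast
    define \<sigma> where "\<sigma> = \<tau>(m \<mapsto> True)"
    have "\<sigma> \<in> p" using splitting[OF \<tau>(1,3,4)] by (simp add: \<sigma>_def)
    then obtain m' where "m' < \<kappa>" "\<sigma> \<in> sq m'" using sub_sqlt sqlt_iff by blast
    have "\<rho> \<subseteq>\<^sub>m \<sigma>" using map_le_trans[OF \<tau>(4) upd_map_le[OF \<tau>(3)]] by (simp add: \<sigma>_def)
    have "cone p \<sigma> \<in> QQ \<kappa>"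
      using Q_cond_in_QQ[OF Q_cond_cone[OF cond \<open>\<sigma> \<in> p\<close> \<open>\<sigma> \<in> sq m'\<close> \<open>\<rho> \<subseteq>\<^sub>m \<sigma>\<close>]] .
    moreover have "limd \<kappa> (cone p \<sigma>) \<subseteq> true_between \<mu> \<kappa>"
    proof
      fix \<eta> assume "\<eta> \<in> limd \<kappa> (cone p \<sigma>)"
      then have "\<sigma> \<subseteq>\<^sub>m \<eta>"
        using limd_cone_extends[OF restr_closed \<open>\<sigma> \<in> p\<close> \<open>\<sigma> \<in> sq m'\<close> \<open>m' < \<kappa>\<close>] by blast
      then have "\<eta> m = Some True" by (auto simp: \<sigma>_def map_le_def)
      moreover have "m < \<kappa>" using \<tau>(1,3) sub_sqlt sq_in_sqlt_iff by blast
      ultimately show "\<eta> \<in> true_between \<mu> \<kappa>" using \<tau>(2) by (auto simp: true_between_def)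
    qed
    ultimately show ?thesis using cone_subset unfolding hitting_def by blast
  qed
qed

section \<open>Pruning\<close>

definition fulfils_above :: "'o::wellorder set \<Rightarrow> ('o \<Rightarrow> 'o seq set set) \<Rightarrow> 'o \<Rightarrow> 'o seq \<Rightarrow> bool" where
  "fulfils_above Ds K l \<eta> \<longleftrightarrow>
     (\<forall>\<delta>\<in>Ds. l < \<delta> \<and> below \<delta> \<subseteq> dom \<eta> \<longrightarrow> (\<exists>q\<in>K \<delta>. restr \<eta> \<delta> \<in> limd \<delta> q))"

definition prune :: "'o::wellorder set \<Rightarrow> ('o \<Rightarrow> 'o seq set set) \<Rightarrow> 'o \<Rightarrow> 'o seq set \<Rightarrow> 'o seq set" where
  "prune Ds K l p = {\<eta> \<in> p. fulfils_above Ds K l \<eta>}"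

text \<open>Outside \<open>S\<close> the values of \<open>\<Lambda>\<close> are unconstrained, so they are discarded.\<close>

definition prune_Lambda ::
    "'o::wellorder set \<Rightarrow> ('o \<Rightarrow> 'o seq set set) \<Rightarrow> 'o \<Rightarrow> 'o set \<Rightarrow> ('o \<Rightarrow> 'o seq set set set) \<Rightarrow>
      'o \<Rightarrow> 'o seq set set set" where
  "prune_Lambda Ds K l S \<Lambda> \<delta> =
     (if \<delta> \<in> Ds \<and> l < \<delta> then insert (K \<delta>) (if \<delta> \<in> S then \<Lambda> \<delta> else {}) else \<Lambda> \<delta>)"

lemma prune_subset: "prune Ds K l p \<subseteq> p"
  by (auto simp: prune_def)

lemma prune_Int: "prune Ds K l (p \<inter> X) = prune Ds K l p \<inter> X"
  by (auto simp: prune_def)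

lemma below_limit_not_subset_atMost: "limit_ord \<delta> \<Longrightarrow> d < \<delta> \<Longrightarrow> \<not> below \<delta> \<subseteq> {b. b \<le> d}"
  by (metis below_iff limit_ord_def mem_Collect_eq not_le subsetD)

lemma fulfils_above_restr: "fulfils_above Ds K l \<eta> \<Longrightarrow> fulfils_above Ds K l (restr \<eta> a)"
  unfolding fulfils_above_def
proof (intro ballI impI)
  fix \<delta> assume h: "\<forall>\<delta>\<in>Ds. l < \<delta> \<and> below \<delta> \<subseteq> dom \<eta> \<longrightarrow> (\<exists>q\<in>K \<delta>. restr \<eta> \<delta> \<in> limd \<delta> q)"
    "\<delta> \<in> Ds" "l < \<delta> \<and> below \<delta> \<subseteq> dom (restr \<eta> a)"
  then have "below \<delta> \<subseteq> dom \<eta>" "\<delta> \<le> a" by (auto simp: dom_restr below_subset_iff[symmetric])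
  then show "\<exists>q\<in>K \<delta>. restr (restr \<eta> a) \<delta> \<in> limd \<delta> q"
    using h by (simp add: restr_restr min_absorb2)
qed

lemma fulfils_above_if_short:
  "(\<And>\<delta>. \<delta> \<in> Ds \<Longrightarrow> limit_ord \<delta>) \<Longrightarrow> dom \<eta> \<subseteq> {b. b \<le> l} \<Longrightarrow> fulfils_above Ds K l \<eta>"
  unfolding fulfils_above_def using below_limit_not_subset_atMost by blast

lemma fulfils_above_upd:
  assumes "\<And>\<delta>. \<delta> \<in> Ds \<Longrightarrow> limit_ord \<delta>" "\<eta> \<in> sq d" "fulfils_above Ds K l \<eta>"
  shows "fulfils_above Ds K l (\<eta>(d \<mapsto> x))"
  unfolding fulfils_above_def
proof (intro ballI impI)
  fix \<delta> assume \<delta>: "\<delta> \<in> Ds" "l < \<delta> \<and> below \<delta> \<subseteq> dom (\<eta>(d \<mapsto> x))"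
  then have "\<delta> \<le> d"
    using below_limit_not_subset_atMost[of \<delta> d] assms(1) dom_upd_sq[OF assms(2)] by force
  then have "below \<delta> \<subseteq> dom \<eta>" using assms(2) by (auto simp: sq_def)
  then show "\<exists>q\<in>K \<delta>. restr (\<eta>(d \<mapsto> x)) \<delta> \<in> limd \<delta> q"
    using assms(3) \<delta> restr_upd[OF \<open>\<delta> \<le> d\<close>] unfolding fulfils_above_def by simp
qed

lemma fulfils_above_if_restrs:
  assumes "\<eta> \<in> sq d" "\<forall>a<d. fulfils_above Ds K l (restr \<eta> a)"
    and "d \<in> Ds \<and> l < d \<longrightarrow> (\<exists>q\<in>K d. \<eta> \<in> limd d q)"
  shows "fulfils_above Ds K l \<eta>"
  unfolding fulfils_above_def
proof (intro ballI impI)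
  fix \<delta> assume \<delta>: "\<delta> \<in> Ds" "l < \<delta> \<and> below \<delta> \<subseteq> dom \<eta>"
  then have "\<delta> \<le> d" using assms(1) by (simp add: sq_def below_subset_iff)
  show "\<exists>q\<in>K \<delta>. restr \<eta> \<delta> \<in> limd \<delta> q"
  proof (cases "\<delta> = d")
    case True
    then show ?thesis using assms(3) \<delta> restr_eq_self[OF assms(1) order_refl] by simp
  next
    case False
    then have "fulfils_above Ds K l (restr \<eta> \<delta>)" using assms(2) \<open>\<delta> \<le> d\<close> by simp
    moreover have "below \<delta> \<subseteq> dom (restr \<eta> \<delta>)" using \<delta> by (auto simp: dom_restr)
    ultimately have "\<exists>q\<in>K \<delta>. restr (restr \<eta> \<delta>) \<delta> \<in> limd \<delta> q"
      using \<delta> unfolding fulfils_above_def by blast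
    then show ?thesis by (simp add: restr_restr)
  qed
qed

lemma fulfils_aboveD:
  assumes "fulfils_above Ds K l \<eta>" "\<eta> \<in> sq d" "d \<in> Ds" "l < d"
  shows "\<exists>q\<in>K d. \<eta> \<in> limd d q"
proof -
  have "below d \<subseteq> dom \<eta>" using assms(2) by (simp add: sq_def)
  then show ?thesis
    using assms restr_eq_self[OF assms(2) order_refl] unfolding fulfils_above_def by metis
qed

context Q_cond
begin

lemma prune_levels:
  assumes "\<And>\<delta>. \<delta> \<in> Ds \<Longrightarrow> limit_ord \<delta>" "a \<le> l"
  shows "prune Ds K l p \<inter> sq a = p \<inter> sq a"
proof -
  have "fulfils_above Ds K l \<eta>" if "\<eta> \<in> sq a" for \<eta>
    using that assms by (intro fulfils_above_if_short) (auto simp: sq_def)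
  then show ?thesis by (auto simp: prune_def)
qed

lemma prune_at_S:
  assumes Ds_lim: "\<And>\<delta>. \<delta> \<in> Ds \<Longrightarrow> limit_ord \<delta>"
    and d: "d \<in> S \<union> {\<delta>\<in>Ds. l < \<delta> \<and> \<delta> < k}" "l < d" "\<eta> \<in> sq d"
  shows "\<eta> \<in> prune Ds K l p \<longleftrightarrow>
    (\<forall>a<d. restr \<eta> a \<in> prune Ds K l p) \<and> (\<forall>I\<in>prune_Lambda Ds K l S \<Lambda> d. \<exists>q\<in>I. \<eta> \<in> limd d q)"
  (is "_ \<longleftrightarrow> ?restrs \<and> ?fulfils")
proof
  assume "\<eta> \<in> prune Ds K l p"
  then have "\<eta> \<in> p" "fulfils_above Ds K l \<eta>" by (auto simp: prune_def)
  moreover have "(\<forall>I\<in>\<Lambda> d. \<exists>q\<in>I. \<eta> \<in> limd d q)" if "d \<in> S"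
    using at_S[OF that d(2,3)] \<open>\<eta> \<in> p\<close> by blast
  ultimately show "?restrs \<and> ?fulfils"
    using restr_closed fulfils_above_restr fulfils_aboveD[OF _ d(3) _ d(2)] d(1,2)
    by (auto simp: prune_def prune_Lambda_def)
next
  assume R: "?restrs \<and> ?fulfils"
  then have restrs: "\<forall>a<d. restr \<eta> a \<in> p \<and> fulfils_above Ds K l (restr \<eta> a)"
    by (auto simp: prune_def)
  have "d \<in> Ds \<Longrightarrow> \<exists>q\<in>K d. \<eta> \<in> limd d q" using R d(2) by (auto simp: prune_Lambda_def)
  then have "fulfils_above Ds K l \<eta>" using fulfils_above_if_restrs[OF d(3)] restrs by blast
  moreover have "\<eta> \<in> p"
  proof (cases "d \<in> S")
    case True
    then have "\<Lambda> d \<subseteq> prune_Lambda Ds K l S \<Lambda> d" by (auto simp: prune_Lambda_def)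
    then show ?thesis using at_S[OF True d(2,3)] R restrs by blast
  next
    case False
    with d(1) have "d \<in> Ds" "d < k" by auto
    then show ?thesis using continuous[OF _ False Ds_lim d(2,3)] restrs by blast
  qed
  ultimately show "\<eta> \<in> prune Ds K l p" by (simp add: prune_def)
qed

lemma prune_Q_cond:
  assumes Ds_inacc: "\<And>\<delta>. \<delta> \<in> Ds \<Longrightarrow> strongly_inaccessible \<delta>"
    and K_dense: "\<And>\<delta>. \<delta> \<in> Ds \<Longrightarrow> dense_open (F \<delta>) (K \<delta>)"
    and Ds_nonstationary: "\<And>d. strongly_inaccessible d \<Longrightarrow> \<not> stationary d (Ds \<inter> below d)"
    and k_inacc: "strongly_inaccessible k"
    and prune_in_F:
      "\<And>d. d \<in> S \<union> {\<delta>\<in>Ds. l < \<delta> \<and> \<delta> < k} \<Longrightarrow> l < d \<Longrightarrow> prune Ds K l p \<inter> sqlt d \<in> F d"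
  shows "Q_cond F k (prune Ds K l p) \<rho> l (S \<union> {\<delta>\<in>Ds. l < \<delta> \<and> \<delta> < k}) (prune_Lambda Ds K l S \<Lambda>)"
    (is "Q_cond F k ?q \<rho> l ?S ?\<Lambda>")
proof (rule Q_cond.intro)
  have Ds_lim: "\<And>\<delta>. \<delta> \<in> Ds \<Longrightarrow> limit_ord \<delta>" using Ds_inacc inacc_limit_ord by blast
  have upd_in: "\<eta>(d \<mapsto> x) \<in> ?q" if "\<eta> \<in> ?q" "\<eta> \<in> sq d" "\<eta>(d \<mapsto> x) \<in> p" for \<eta> d x
    using that fulfils_above_upd[OF Ds_lim that(2)] by (auto simp: prune_def)
  have stem_short: "dom (\<rho>(l \<mapsto> x)) \<subseteq> {b. b \<le> l}" "dom \<rho> \<subseteq> {b. b \<le> l}" for x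
    using dom_upd_sq[OF stem_sq] stem_sq by (auto simp: sq_def)
  show "?q \<noteq> {}" using stem_in fulfils_above_if_short[OF Ds_lim stem_short(2)] by (auto simp: prune_def)
  show "?q \<subseteq> sqlt k" using prune_subset sub_sqlt by blast
  show "restr \<eta> a \<in> ?q" if "\<eta> \<in> ?q" for \<eta> a
    using that restr_closed fulfils_above_restr by (auto simp: prune_def)
  show "?S \<subseteq> below k" using S_below by auto
  show "strongly_inaccessible d" if "d \<in> ?S" for d using that S_inacc Ds_inacc by blast
  show "\<not> stationary k ?S"
    using nonstationary_Un[OF k_inacc S_nonstationary Ds_nonstationary[OF k_inacc]]
    by (rule nonstationary_subset) auto
  show "\<not> stationary d (?S \<inter> below d)" if "d < k" "strongly_inaccessible d" for d
    using nonstationary_Un[OF that(2) S_nonstationary_below[OF that] Ds_nonstationary[OF that(2)]]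
    by (rule nonstationary_subset) auto
  show "l < k" "\<rho> \<in> sq l" by (fact stem_lt stem_sq)+
  show "?q \<inter> sq a = {restr \<rho> a}" if "a \<le> l" for a
    using prune_levels[OF Ds_lim that] levels_upto_stem[OF that] by simp
  show "\<rho>(l \<mapsto> False) \<in> ?q" "\<rho>(l \<mapsto> True) \<in> ?q"
    using stem_False stem_True fulfils_above_if_short[OF Ds_lim stem_short(1)] by (auto simp: prune_def)
  show "\<eta>(d \<mapsto> False) \<in> ?q \<and> \<eta>(d \<mapsto> True) \<in> ?q" if "\<eta> \<in> ?q" "\<eta> \<in> sq d" "\<rho> \<subseteq>\<^sub>m \<eta>" for \<eta> d
    using splitting[OF _ that(2,3)] that(1) prune_subset upd_in[OF that(1,2)] by blast
  show "\<eta> \<in> ?q \<longleftrightarrow> (\<forall>a<d. restr \<eta> a \<in> ?q)"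
    if "d < k" "d \<notin> ?S" "limit_ord d" "l < d" "\<eta> \<in> sq d" for d \<eta>
  proof
    assume restrs: "\<forall>a<d. restr \<eta> a \<in> ?q"
    then have "\<eta> \<in> p" using continuous[of d \<eta>] that prune_subset by blast
    moreover have "fulfils_above Ds K l \<eta>"
      using fulfils_above_if_restrs[OF that(5)] restrs that(1,2,4) by (auto simp: prune_def)
    ultimately show "\<eta> \<in> ?q" by (simp add: prune_def)
  qed (use restr_closed fulfils_above_restr in \<open>auto simp: prune_def\<close>)
  show "?\<Lambda> d \<lesssim> below d" if "d \<in> ?S" for d
  proof (cases "d \<in> Ds \<and> l < d")
    case True
    have "(if d \<in> S then \<Lambda> d else {}) \<lesssim> below d" using Lambda_small by simp
    then have "insert (K d) (if d \<in> S then \<Lambda> d else {}) \<lesssim> below d"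
      using True inacc_infinite[OF Ds_inacc] by (intro insert_lepoll_infinite) auto
    then show ?thesis using True by (simp add: prune_Lambda_def)
  next
    case False
    then show ?thesis using that Lambda_small by (auto simp: prune_Lambda_def)
  qed
  show "dense_open (F d) I" if "d \<in> ?S" "I \<in> ?\<Lambda> d" for d I
    using that Lambda_dense K_dense by (auto simp: prune_Lambda_def split: if_splits)
  show "?q \<inter> sqlt d \<in> F d" if "d \<in> ?S" "l < d" for d using prune_in_F that .
  show "\<eta> \<in> ?q \<longleftrightarrow> (\<forall>a<d. restr \<eta> a \<in> ?q) \<and> (\<forall>I\<in>?\<Lambda> d. \<exists>q\<in>I. \<eta> \<in> limd d q)"
    if "d \<in> ?S" "l < d" "\<eta> \<in> sq d" for d \<eta>
    using prune_at_S[OF Ds_lim that] .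
qed

end

lemma Q_cond_prune:
  assumes Ds_inacc: "\<And>\<delta>. \<delta> \<in> Ds \<Longrightarrow> strongly_inaccessible \<delta>"
    and K_dense: "\<And>\<delta>. \<delta> \<in> Ds \<Longrightarrow> dense_open (QQ \<delta>) (K \<delta>)"
    and Ds_nonstationary: "\<And>d. strongly_inaccessible d \<Longrightarrow> \<not> stationary d (Ds \<inter> below d)"
  shows "strongly_inaccessible \<kappa> \<Longrightarrow> Q_cond QQ \<kappa> p \<rho> l S \<Lambda> \<Longrightarrow>
    Q_cond QQ \<kappa> (prune Ds K l p) \<rho> l (S \<union> {\<delta>\<in>Ds. l < \<delta> \<and> \<delta> < \<kappa>}) (prune_Lambda Ds K l S \<Lambda>)"
proof (induction \<kappa> arbitrary: p S rule: less_induct)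
  case (less \<kappa>)
  interpret Q_cond QQ \<kappa> p \<rho> l S \<Lambda> by (fact less.prems(2))
  show ?case
  proof (rule prune_Q_cond[OF Ds_inacc K_dense Ds_nonstationary less.prems(1)])
    fix d assume d: "d \<in> S \<union> {\<delta>\<in>Ds. l < \<delta> \<and> \<delta> < \<kappa>}" "l < d"
    then have "d < \<kappa>" "strongly_inaccessible d" using S_below S_inacc Ds_inacc by auto
    then have "Q_cond QQ d (p \<inter> sqlt d) \<rho> l (S \<inter> below d) \<Lambda>"
      using restrict_to_inacc d(2) by blast
    then have "Q_cond QQ d (prune Ds K l (p \<inter> sqlt d)) \<rho> l
        (S \<inter> below d \<union> {\<delta>\<in>Ds. l < \<delta> \<and> \<delta> < d}) (prune_Lambda Ds K l (S \<inter> below d) \<Lambda>)"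
      using less.IH \<open>d < \<kappa>\<close> \<open>strongly_inaccessible d\<close> by blast
    then show "prune Ds K l p \<inter> sqlt d \<in> QQ d" using Q_cond_in_QQ prune_Int by metis
  qed
qed

section \<open>The partition\<close>

definition succ_inacc :: "'o::wellorder set" where
  "succ_inacc = {\<delta>. strongly_inaccessible \<delta> \<and> (\<exists>a<\<delta>. \<forall>i. strongly_inaccessible i \<and> i < \<delta> \<longrightarrow> i \<le> a)}"

definition inacc_bound :: "'o::wellorder \<Rightarrow> 'o" where
  "inacc_bound \<delta> = (LEAST a. a < \<delta> \<and> (\<forall>i. strongly_inaccessible i \<and> i < \<delta> \<longrightarrow> i \<le> a))"

lemma inacc_bound:
  assumes "\<delta> \<in> succ_inacc"
  shows "inacc_bound \<delta> < \<delta>"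
    and "\<And>i. strongly_inaccessible i \<Longrightarrow> i < \<delta> \<Longrightarrow> i \<le> inacc_bound \<delta>"
proof -
  have "\<exists>a. a < \<delta> \<and> (\<forall>i. strongly_inaccessible i \<and> i < \<delta> \<longrightarrow> i \<le> a)"
    using assms by (auto simp: succ_inacc_def)
  then have "inacc_bound \<delta> < \<delta> \<and> (\<forall>i. strongly_inaccessible i \<and> i < \<delta> \<longrightarrow> i \<le> inacc_bound \<delta>)"
    unfolding inacc_bound_def by (rule LeastI_ex)
  then show "inacc_bound \<delta> < \<delta>" "\<And>i. strongly_inaccessible i \<Longrightarrow> i < \<delta> \<Longrightarrow> i \<le> inacc_bound \<delta>"
    by blast+
qed

lemma succ_inacc_nonstationary:
  assumes "strongly_inaccessible k"
  shows "\<not> stationary k (succ_inacc \<inter> below k)"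
proof (cases "\<forall>a<k. \<exists>i. strongly_inaccessible i \<and> a < i \<and> i < k")
  case True
  let ?C = "{g. g < k \<and> limit_ord g \<and> (\<forall>a<g. \<exists>i. strongly_inaccessible i \<and> a < i \<and> i < g)}"
  have "succ_inacc \<inter> below k \<inter> ?C = {}"
    by (auto simp: succ_inacc_def) (meson not_le)
  then show ?thesis using club_limits_of_inacc[OF assms True] unfolding stationary_def by blast
next
  case False
  then obtain a where "a < k" "\<And>i. strongly_inaccessible i \<Longrightarrow> a < i \<Longrightarrow> \<not> i < k" by blast
  then have "succ_inacc \<inter> below k \<inter> {g. a < g \<and> g < k} = {}" by (auto simp: succ_inacc_def)
  then show ?thesis
    using club_tail[OF inacc_limit_ord[OF assms] \<open>a < k\<close>] unfolding stationary_def by blast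
qed

lemma succ_inacc_above:
  assumes "\<forall>a<lam. \<exists>d. a < d \<and> d < lam \<and> strongly_inaccessible d" "a < lam"
  shows "\<exists>\<delta>\<in>succ_inacc. \<delta> < lam \<and> a < inacc_bound \<delta>"
proof -
  obtain \<delta>1 where \<delta>1: "a < \<delta>1" "\<delta>1 < lam" "strongly_inaccessible \<delta>1" using assms by blast
  then have "\<exists>x. strongly_inaccessible x \<and> \<delta>1 < x \<and> x < lam" using assms(1) by blast
  define \<delta> where "\<delta> = (LEAST x. strongly_inaccessible x \<and> \<delta>1 < x \<and> x < lam)"
  have \<delta>: "strongly_inaccessible \<delta> \<and> \<delta>1 < \<delta> \<and> \<delta> < lam"
    unfolding \<delta>_def by (rule LeastI_ex) fact
  have "i \<le> \<delta>1" if "strongly_inaccessible i" "i < \<delta>" for i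
    using that \<delta> not_less_Least[of i "\<lambda>x. strongly_inaccessible x \<and> \<delta>1 < x \<and> x < lam"]
    unfolding \<delta>_def by (meson less_trans not_le)
  then have "\<delta> \<in> succ_inacc" using \<delta> by (auto simp: succ_inacc_def)
  moreover have "a < inacc_bound \<delta>" using inacc_bound(2)[OF \<open>\<delta> \<in> succ_inacc\<close>] \<delta>1 \<delta> by (meson less_le_trans)
  ultimately show ?thesis using \<delta> by blast
qed

definition pruned_conds :: "'o::wellorder \<Rightarrow> 'o seq set set" where
  "pruned_conds lam = {q. \<exists>\<rho> l S \<Lambda>. Q_cond QQ lam q \<rho> l S \<Lambda> \<and>
     (\<forall>\<delta>\<in>succ_inacc. l < \<delta> \<and> \<delta> < lam \<longrightarrow> \<delta> \<in> S \<and> hitting \<delta> (inacc_bound \<delta>) \<in> \<Lambda> \<delta>)}"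

definition below_pruned :: "'o::wellorder \<Rightarrow> 'o seq set set" where
  "below_pruned lam = {q \<in> QQ lam. \<exists>q'\<in>pruned_conds lam. q \<subseteq> q'}"

definition Cohen_tree :: "'o::wellorder \<Rightarrow> 'o \<Rightarrow> 'o seq set" where
  "Cohen_tree lam \<beta> = {\<nu> \<in> sqlt lam. \<forall>\<delta>\<in>succ_inacc. \<beta> < \<delta> \<and> below \<delta> \<subseteq> dom \<nu> \<longrightarrow>
     restr \<nu> \<delta> \<in> true_between (inacc_bound \<delta>) \<delta>}"

lemma dense_open_below_pruned:
  assumes "strongly_inaccessible lam"
  shows "dense_open (QQ lam) (below_pruned lam)"
  unfolding dense_open_def
proof (intro conjI ballI impI)
  show "below_pruned lam \<subseteq> QQ lam" by (auto simp: below_pruned_def)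
next
  fix p q assume "p \<in> below_pruned lam" "q \<in> QQ lam" "q \<subseteq> p"
  then show "q \<in> below_pruned lam" unfolding below_pruned_def by blast
next
  fix p assume "p \<in> QQ lam"
  then obtain \<rho> l S \<Lambda> where "Q_cond QQ lam p \<rho> l S \<Lambda>" using QQ_iff by blast
  let ?K = "\<lambda>\<delta>. hitting \<delta> (inacc_bound \<delta>)"
  let ?S = "S \<union> {\<delta>\<in>succ_inacc. l < \<delta> \<and> \<delta> < lam}"
  have pruned: "Q_cond QQ lam (prune succ_inacc ?K l p) \<rho> l ?S (prune_Lambda succ_inacc ?K l S \<Lambda>)"
    using Q_cond_prune[OF _ dense_open_hitting[OF inacc_bound(1)] succ_inacc_nonstationary
        assms \<open>Q_cond QQ lam p \<rho> l S \<Lambda>\<close>]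
    by (simp add: succ_inacc_def)
  moreover have "\<forall>\<delta>\<in>succ_inacc. l < \<delta> \<and> \<delta> < lam \<longrightarrow> \<delta> \<in> ?S \<and> ?K \<delta> \<in> prune_Lambda succ_inacc ?K l S \<Lambda> \<delta>"
    by (simp add: prune_Lambda_def)
  ultimately have "prune succ_inacc ?K l p \<in> pruned_conds lam"
    unfolding pruned_conds_def by blast
  then have "prune succ_inacc ?K l p \<in> below_pruned lam"
    using Q_cond_in_QQ[OF pruned] by (auto simp: below_pruned_def)
  then show "\<exists>q\<in>below_pruned lam. q \<subseteq> p" using prune_subset by blast
qed

lemma Cohen_tree_restr:
  assumes "\<eta> \<in> Cohen_tree lam \<beta>"
  shows "restr \<eta> a \<in> Cohen_tree lam \<beta>"
  unfolding Cohen_tree_def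
proof (intro CollectI conjI ballI impI)
  show "restr \<eta> a \<in> sqlt lam" using assms restr_in_sqlt by (auto simp: Cohen_tree_def)
  fix \<delta> assume \<delta>: "\<delta> \<in> succ_inacc" "\<beta> < \<delta> \<and> below \<delta> \<subseteq> dom (restr \<eta> a)"
  then have "below \<delta> \<subseteq> dom \<eta>" "\<delta> \<le> a" by (auto simp: dom_restr below_subset_iff[symmetric])
  then show "restr (restr \<eta> a) \<delta> \<in> true_between (inacc_bound \<delta>) \<delta>"
    using assms \<delta> by (simp add: Cohen_tree_def restr_restr min_absorb2)
qed

lemma extend_by_False:
  assumes "\<eta> \<in> sq a" "a \<le> b"
  shows "\<exists>\<nu>\<in>sq b. \<eta> \<subseteq>\<^sub>m \<nu> \<and> (\<forall>x. a \<le> x \<longrightarrow> \<nu> x \<noteq> Some True)"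
proof (intro bexI conjI allI impI)
  let ?\<nu> = "\<lambda>x. if x < a then \<eta> x else if x < b then Some False else None"
  have "dom \<eta> = below a" using assms(1) by (simp add: sq_def)
  then have defined: "\<eta> x \<noteq> None" if "x < a" for x using that by (metis below_iff domIff)
  have "dom ?\<nu> = below b"
    using assms(2) defined by (auto simp: domIff split: if_splits dest: less_le_trans)
  then show "?\<nu> \<in> sq b" by (simp add: sq_def)
  show "\<eta> \<subseteq>\<^sub>m ?\<nu>" using \<open>dom \<eta> = below a\<close> by (auto simp: map_le_def)
qed auto

lemma nowhere_dense_Cohen_tree:
  assumes "\<forall>a<lam. \<exists>d. a < d \<and> d < lam \<and> strongly_inaccessible d" "\<beta> < lam"
  shows "nowhere_dense_subtree lam (Cohen_tree lam \<beta>)"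
  unfolding nowhere_dense_subtree_def
proof (intro conjI ballI allI)
  show "Cohen_tree lam \<beta> \<subseteq> sqlt lam" by (auto simp: Cohen_tree_def)
  show "restr \<eta> a \<in> Cohen_tree lam \<beta>" if "\<eta> \<in> Cohen_tree lam \<beta>" for \<eta> a
    using Cohen_tree_restr that .
  fix \<eta> assume "\<eta> \<in> sqlt lam"
  then obtain a where "a < lam" "\<eta> \<in> sq a" by (auto simp: sqlt_iff)
  then obtain \<delta> where \<delta>: "\<delta> \<in> succ_inacc" "\<delta> < lam" "max \<beta> a < inacc_bound \<delta>"
    using succ_inacc_above[OF assms(1), of "max \<beta> a"] assms(2) by auto
  then have "a \<le> \<delta>" "\<beta> < \<delta>" using inacc_bound(1)[OF \<delta>(1)] by auto
  then obtain \<nu> where \<nu>: "\<nu> \<in> sq \<delta>" "\<eta> \<subseteq>\<^sub>m \<nu>" "\<And>x. a \<le> x \<Longrightarrow> \<nu> x \<noteq> Some True"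
    using extend_by_False[OF \<open>\<eta> \<in> sq a\<close>] by blast
  have "\<nu> \<notin> true_between (inacc_bound \<delta>) \<delta>"
    using \<nu>(3) \<delta>(3) by (auto simp: true_between_def)
  then have "\<nu> \<notin> Cohen_tree lam \<beta>"
    using \<delta>(1) \<open>\<beta> < \<delta>\<close> \<nu>(1) restr_eq_self[OF \<nu>(1) order_refl] by (auto simp: Cohen_tree_def sq_def)
  then show "\<exists>\<nu>\<in>sqlt lam. \<eta> \<subseteq>\<^sub>m \<nu> \<and> \<nu> \<notin> Cohen_tree lam \<beta>"
    using sq_in_sqlt[OF \<nu>(1) \<delta>(2)] \<nu>(2) by blast
qed

lemma branch_in_Cohen_tree:
  assumes "fulfils lam \<eta> (below_pruned lam)"
  shows "\<exists>\<beta><lam. \<eta> \<in> limd lam (Cohen_tree lam \<beta>)"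
proof -
  obtain q' where "q' \<in> below_pruned lam" "\<eta> \<in> limd lam q'"
    using assms by (auto simp: fulfils_def)
  then obtain q where "q \<in> pruned_conds lam" "q' \<subseteq> q" by (auto simp: below_pruned_def)
  have "\<eta> \<in> limd lam q" using limd_mono[OF \<open>q' \<subseteq> q\<close>] \<open>\<eta> \<in> limd lam q'\<close> by blast
  from \<open>q \<in> pruned_conds lam\<close> obtain \<rho> l S \<Lambda> where cond: "Q_cond QQ lam q \<rho> l S \<Lambda>"
    and hits: "\<And>\<delta>. \<delta> \<in> succ_inacc \<Longrightarrow> l < \<delta> \<Longrightarrow> \<delta> < lam \<Longrightarrow> \<delta> \<in> S \<and> hitting \<delta> (inacc_bound \<delta>) \<in> \<Lambda> \<delta>"
    by (auto simp: pruned_conds_def)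
  interpret Q_cond QQ lam q \<rho> l S \<Lambda> by (fact cond)
  have \<eta>: "\<eta> \<in> sq lam" "\<And>a. a < lam \<Longrightarrow> restr \<eta> a \<in> q"
    using \<open>\<eta> \<in> limd lam q\<close> by (auto simp: limd_def)
  have "restr \<eta> a \<in> Cohen_tree lam l" if "a < lam" for a
    unfolding Cohen_tree_def
  proof (intro CollectI conjI ballI impI)
    show "restr \<eta> a \<in> sqlt lam" using restr_in_sq[OF \<eta>(1)] that sq_in_sqlt less_imp_le by blast
    fix \<delta> assume \<delta>: "\<delta> \<in> succ_inacc" "l < \<delta> \<and> below \<delta> \<subseteq> dom (restr \<eta> a)"
    then have "\<delta> \<le> a" by (auto simp: dom_restr below_subset_iff[symmetric])
    with that have "\<delta> < lam" by simp
    then have "restr \<eta> \<delta> \<in> q" "restr \<eta> \<delta> \<in> sq \<delta>" using \<eta> restr_in_sq less_imp_le by blast+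
    then obtain q' where "q' \<in> hitting \<delta> (inacc_bound \<delta>)" "restr \<eta> \<delta> \<in> limd \<delta> q'"
      using at_S hits[OF \<delta>(1) _ \<open>\<delta> < lam\<close>] \<delta>(2) by blast
    then show "restr (restr \<eta> a) \<delta> \<in> true_between (inacc_bound \<delta>) \<delta>"
      using \<open>\<delta> \<le> a\<close> by (auto simp: hitting_def restr_restr min_absorb2)
  qed
  then show ?thesis using \<eta>(1) stem_lt by (auto simp: limd_def)
qed

theorem claim3p17:
  fixes lam :: "'o::wellorder"
  assumes "strongly_inaccessible lam"
    and "\<forall>a<lam. \<exists>d. a < d \<and> d < lam \<and> strongly_inaccessible d"
  shows "\<exists>A0 A1. A0 \<union> A1 = sq lam \<and> A0 \<inter> A1 = {}
           \<and> A0 \<in> id_Cohen lam \<and> A1 \<in> id_Q lam"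
proof -
  define A0 where "A0 = {\<eta> \<in> sq lam. fulfils lam \<eta> (below_pruned lam)}"
  define A1 where "A1 = {\<eta> \<in> sq lam. \<not> fulfils lam \<eta> (below_pruned lam)}"
  obtain i0 where "i0 < lam" using inacc_nonempty[OF assms(1)] by blast
  have "A0 \<in> id_Cohen lam"
    unfolding id_Cohen_def
  proof (intro CollectI conjI exI)
    show "\<forall>i<lam. nowhere_dense_subtree lam (Cohen_tree lam i)"
      using nowhere_dense_Cohen_tree[OF assms(2)] by blast
    show "A0 \<subseteq> (\<Union>i\<in>below lam. limd lam (Cohen_tree lam i))"
      using branch_in_Cohen_tree by (fastforce simp: A0_def)
  qed (auto simp: A0_def)
  moreover have "A1 \<in> id_Q lam"
    unfolding id_Q_def
  proof (intro CollectI conjI exI)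
    show "\<forall>i<lam. dense_open (QQ lam) ((\<lambda>_. below_pruned lam) i)"
      using dense_open_below_pruned[OF assms(1)] by simp
    show "\<forall>\<eta>\<in>A1. \<exists>i<lam. \<not> fulfils lam \<eta> ((\<lambda>_. below_pruned lam) i)"
      using \<open>i0 < lam\<close> by (auto simp: A1_def)
  qed (auto simp: A1_def)
  moreover have "A0 \<union> A1 = sq lam" "A0 \<inter> A1 = {}" by (auto simp: A0_def A1_def)
  ultimately show ?thesis by blast
qed

end
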